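(* Let $\theta\in k$, let $\mathcal D$ be a set, let $RB$ be the free Rota--Baxter algebra of weight $\theta$ on $\mathcal D$ with Rota--Baxter map $R$, and let $\iota:GL\to RB$ be the canonical embedding of the Grossman--Larson algebra (the linear map with $\iota(e)=\mathbf 1$, sending the one-vertex tree decorated by $d$ to $d$, sending grafting of trees to $\triangleleft_\theta$ and the Grossman--Larson product of nonempty forests to $\ast_\theta$). Then for all $b_1,\ldots,b_n\in\mathcal D$ (viewed as one-vertex trees), the image of their commutative (forest) product is $$ \iota(b_1\cdots b_n)=\sum_{\sigma\in S_n}R\Big(\cdots R\big(R(b_{\sigma(1)})b_{\sigma(2)}\big)\cdots\Big)b_{\sigma(n)}. $$
   Context: $k$ is a field of characteristic zero. A Rota--Baxter algebra of weight $\theta$ is a unital associative algebra $A$ with linear $R:A\to A$ satisfying $R(x)R(y)=R(R(x)y+xR(y))+\theta R(xy)$. On it, $a\triangleleft_\theta b:=aR(b)-R(b)a+\theta ab$ and $a\ast_\theta b:=R(a)b+aR(b)+\theta ab$. Grossman--Larson algebra $GL$: $\mathcal T$ is the span of $\mathcal D$-decorated rooted trees with grafting $t\curvearrowleft t'$ (sum over vertices $v$ of $t$ of the tree obtained by joining $v$ to the root of $t'$), the free right pre-Lie algebra on $\mathcal D$; $GL=S(\mathcal T)$ is the span of forests (commutative monomials in trees, unit the empty forest $e$). Forests act on trees by $t\curvearrowleft e=t$, $t\curvearrowleft(t_1\cdots t_n)=(t\curvearrowleft(t_1\cdots t_{n-1}))\curvearrowleft t_n-\sum_{i=1}^{n-1}t\curvearrowleft(t_1\cdots(t_i\curvearrowleft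 t_n)\cdots t_{n-1})$, and the Grossman--Larson product is $(t_1\cdots t_n)\ast(t'_1\cdots t'_m)=\sum_f F_0(t_1\curvearrowleft F_1)\cdots(t_n\curvearrowleft F_n)$ over maps $f:\{1..m\}\to\{0..n\}$, $F_i=\prod_{j\in f^{-1}(i)}t'_j$. The map $\iota$ is well defined and injective. *)

theory Defs
  imports Complex_Main "HOL-Library.Multiset" "HOL-Library.Poly_Mapping"
    "HOL-Combinatorics.Permutations"
begin

definition k_algebra :: "('k::field \<Rightarrow> 'a::ring_1 \<Rightarrow> 'a) \<Rightarrow> bool" where
  "k_algebra sc \<longleftrightarrow> vector_space sc \<and>
     (\<forall>c x y. sc c (x * y) = sc c x * y \<and> sc c (x * y) = x * sc c y)"

definition rota_baxter :: "('k::field \<Rightarrow> 'a::ring_1 \<Rightarrow> 'a) \<Rightarrow> 'k \<Rightarrow> ('a \<Rightarrow> 'a) \<Rightarrow> bool" where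
  "rota_baxter sc \<theta> R \<longleftrightarrow> k_algebra sc \<and> Vector_Spaces.linear sc sc R \<and>
     (\<forall>x y. R x * R y = R (R x * y + x * R y) + sc \<theta> (R (x * y)))"

definition rb_tri :: "('k \<Rightarrow> 'a::ring_1 \<Rightarrow> 'a) \<Rightarrow> 'k \<Rightarrow> ('a \<Rightarrow> 'a) \<Rightarrow> 'a \<Rightarrow> 'a \<Rightarrow> 'a" where
  "rb_tri sc \<theta> R a b = a * R b - R b * a + sc \<theta> (a * b)"

definition rb_star :: "('k \<Rightarrow> 'a::ring_1 \<Rightarrow> 'a) \<Rightarrow> 'k \<Rightarrow> ('a \<Rightarrow> 'a) \<Rightarrow> 'a \<Rightarrow> 'a \<Rightarrow> 'a" where
  "rb_star sc \<theta> R a b = R a * b + a * R b + sc \<theta> (a * b)"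

text \<open>Non-planar rooted trees decorated by 'd: a root decoration and a multiset of
  subtrees. Forests are multisets of trees (commutative monomials, e = empty forest).\<close>

datatype 'd rtree = Node 'd "'d rtree multiset"

type_synonym 'd forest = "'d rtree multiset"

definition leaf :: "'d \<Rightarrow> 'd rtree" where
  "leaf d = Node d {#}"

definition scale :: "'k::comm_ring_1 \<Rightarrow> ('b \<Rightarrow>\<^sub>0 'k) \<Rightarrow> ('b \<Rightarrow>\<^sub>0 'k)" where
  "scale c p = Poly_Mapping.map (\<lambda>x. c * x) p"

definition lin :: "('b \<Rightarrow> ('c \<Rightarrow>\<^sub>0 'k::comm_ring_1)) \<Rightarrow> ('b \<Rightarrow>\<^sub>0 'k) \<Rightarrow> ('c \<Rightarrow>\<^sub>0 'k)" where
  "lin f p = (\<Sum>x\<in>Poly_Mapping.keys p. scale (Poly_Mapping.lookup p x) (f x))"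

definition lin_ext :: "('k::comm_ring_1 \<Rightarrow> 'a::ab_group_add \<Rightarrow> 'a) \<Rightarrow> ('b \<Rightarrow> 'a) \<Rightarrow> ('b \<Rightarrow>\<^sub>0 'k) \<Rightarrow> 'a" where
  "lin_ext sc j p = (\<Sum>x\<in>Poly_Mapping.keys p. sc (Poly_Mapping.lookup p x) (j x))"

text \<open>A linear combination of trees viewed in the symmetric algebra S(T) = GL
  (forests = multisets of trees, product = union of multisets, i.e. the
  monoid-algebra product of poly_mapping).\<close>

definition tree_to_gl :: "('d rtree \<Rightarrow>\<^sub>0 'k::comm_ring_1) \<Rightarrow> ('d forest \<Rightarrow>\<^sub>0 'k)" where
  "tree_to_gl = lin (\<lambda>s. Poly_Mapping.single {#s#} 1)"

text \<open>graft t u = sum over vertices v of t of the tree obtained by joining v to the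
  root of u.\<close>

lemma size_child_less:
  assumes "z \<in># ch" shows "size z < Suc (size_multiset size ch)"
proof -
  have "ch = add_mset z (ch - {#z#})" using assms by (simp add: insert_DiffM)
  then have "size_multiset size ch = Suc (size z) + size_multiset size (ch - {#z#})"
    by (metis size_multiset_add_mset)
  then show ?thesis by simp
qed

function graft :: "'d rtree \<Rightarrow> 'd rtree \<Rightarrow> ('d rtree \<Rightarrow>\<^sub>0 'k::comm_ring_1)" where
  "graft (Node d ch) u =
     Poly_Mapping.single (Node d (add_mset u ch)) 1 +
     sum_mset (image_mset (\<lambda>c. \<Sum>s\<in>Poly_Mapping.keys (graft c u).
        scale (Poly_Mapping.lookup (graft c u) s) (Poly_Mapping.single (Node d (add_mset s (ch - {#c#}))) 1)) ch)"
  by pat_completeness auto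
termination
  by (relation "measure (size \<circ> fst)") (auto intro: size_child_less)

text \<open>act_rev t [u_n, ..., u_1] = t \<curvearrowleft> (u_1 ... u_n), following the recursion
  t \<curvearrowleft> (t_1...t_n) = (t \<curvearrowleft> (t_1...t_{n-1})) \<curvearrowleft> t_n
     - sum_i t \<curvearrowleft> (t_1 ... (t_i \<curvearrowleft> t_n) ... t_{n-1})  (multilinear extension).\<close>

fun act_rev :: "'d rtree \<Rightarrow> 'd rtree list \<Rightarrow> ('d rtree \<Rightarrow>\<^sub>0 'k::comm_ring_1)" where
  "act_rev t [] = Poly_Mapping.single t 1"
| "act_rev t (u # rus) =
     lin (\<lambda>s. graft s u) (act_rev t rus) -
     (\<Sum>i<length rus. \<Sum>s\<in>Poly_Mapping.keys (graft (rus ! i) u :: 'd rtree \<Rightarrow>\<^sub>0 'k).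
        scale (Poly_Mapping.lookup (graft (rus ! i) u) s) (act_rev t (rus[i := s])))"

definition forest_list :: "'d forest \<Rightarrow> 'd rtree list" where
  "forest_list F = (SOME xs. mset xs = F)"

definition act :: "'d rtree \<Rightarrow> 'd forest \<Rightarrow> ('d rtree \<Rightarrow>\<^sub>0 'k::comm_ring_1)" where
  "act t F = act_rev t (rev (forest_list F))"

text \<open>(t_1...t_n) * (t'_1...t'_m) = sum over f : {1..m} -> {0..n} of
  F_0 (t_1 \<curvearrowleft> F_1) ... (t_n \<curvearrowleft> F_n),  F_i = prod_{j in f^-1(i)} t'_j.
  Indices of t' are shifted to 0..m-1.\<close>

definition gl_prod :: "'d forest \<Rightarrow> 'd forest \<Rightarrow> ('d forest \<Rightarrow>\<^sub>0 'k::comm_ring_1)" where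
  "gl_prod F G =
    (let ts = forest_list F; us = forest_list G; n = length ts; m = length us;
         part = (\<lambda>f i. image_mset (\<lambda>j. us ! j) (filter_mset (\<lambda>j. f j = i) (mset_set {..<m})))
     in \<Sum>f\<in>Pi\<^sub>E {..<m} (\<lambda>_. {..n}).
          Poly_Mapping.single (part f 0) 1 *
          (\<Prod>i\<in>{1..n}. tree_to_gl (act (ts ! (i - 1)) (part f i))))"

fun rb_nest :: "('a::ring_1 \<Rightarrow> 'a) \<Rightarrow> 'a list \<Rightarrow> 'a" where
  "rb_nest R [] = 1"
| "rb_nest R (x # xs) = foldl (\<lambda>w b. R w * b) x xs"

end

theory Submission
  imports Defs "HOL-Combinatorics.Multiset_Permutations"
begin

(* Let S(M) = rb_sym M be the sum, over all orderings x_1 ... x_n of a multiset M, of the right-nested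
   words R(... R(R(x_1) x_2) ...) x_n; equivalently S(M) = sum_{x in M} R(S(M - x)) x.
   For M nonempty the Rota-Baxter identity gives
     S(M + y) = S(M) *_theta y - sum_{x in M} S(M - x + (x <|_theta y)),
   while in the Grossman-Larson algebra a forest F times a single tree u is
     F * u = F u + sum_{t in F} (t <- u) (F - t).
   Since iota turns * into *_theta and grafting into <|_theta, iota(F) and S(iota of the trees
   of F) obey the same recursion, so they agree on every nonempty forest by induction on
   its number of trees. For one-vertex trees this is the stated formula. *)

lemma sum_mset_cong:
  "(\<And>x. x \<in># M \<Longrightarrow> f x = g x) \<Longrightarrow> (\<Sum>x\<in>#M. f x) = (\<Sum>x\<in>#M. g x)"
  by (metis image_mset_cong)

lemma sum_mset_subtractf:
  "(\<Sum>x\<in>#M. f x - g x) = (\<Sum>x\<in>#M. f x) - (\<Sum>x\<in>#M. (g x :: 'b::ab_group_add))"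
  by (induction M) (auto simp: algebra_simps)

lemma sum_mset_remove_swap:
  "(\<Sum>x\<in>#M. \<Sum>z\<in>#M - {#x#}. g x z) = (\<Sum>z\<in>#M. \<Sum>x\<in>#M - {#z#}. (g x z :: 'b::comm_monoid_add))"
proof (induction M)
  case (add a N)
  have "(\<Sum>x\<in>#N. \<Sum>z\<in>#add_mset a N - {#x#}. g x z) = (\<Sum>x\<in>#N. g x a + (\<Sum>z\<in>#N - {#x#}. g x z))"
    and "(\<Sum>z\<in>#N. \<Sum>x\<in>#add_mset a N - {#z#}. g x z) = (\<Sum>z\<in>#N. g a z + (\<Sum>x\<in>#N - {#z#}. g x z))"
    by (auto intro: sum_mset_cong)
  with add show ?case by (simp add: sum_mset.distrib algebra_simps)
qed simp

lemma sum_mset_mset_conv_sum_nth: "(\<Sum>x\<in>#mset xs. f x) = (\<Sum>i<length xs. f (xs ! i))"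
  by (induction xs rule: rev_induct) (simp_all add: nth_append add.commute)

lemma sum_lessThan_single_nth: "(\<Sum>l<length xs. {#xs ! l#}) = mset xs"
  by (induction xs rule: rev_induct) (simp_all add: nth_append)

lemma sum_permutations_of_set_Cons:
  assumes "finite A" "A \<noteq> {}"
  shows "(\<Sum>ps\<in>permutations_of_set A. g ps) = (\<Sum>a\<in>A. \<Sum>ps\<in>permutations_of_set (A - {a}). g (a # ps))"
proof -
  have "(\<Sum>ps\<in>permutations_of_set A. g ps) = (\<Sum>a\<in>A. \<Sum>ps\<in>(#) a ` permutations_of_set (A - {a}). g ps)"
    unfolding permutations_of_set_nonempty[OF assms(2)]
    by (rule sum.UNION_disjoint) (use assms(1) in auto)
  also have "\<dots> = (\<Sum>a\<in>A. \<Sum>ps\<in>permutations_of_set (A - {a}). g (a # ps))"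
    by (rule sum.cong[OF refl], subst sum.reindex) (auto simp: inj_on_def)
  finally show ?thesis .
qed

lemma bij_betw_permutes_permutations_of_set:
  "bij_betw (\<lambda>\<sigma>. map \<sigma> [0..<n]) {\<sigma>. \<sigma> permutes {..<n}} (permutations_of_set {..<n})"
proof (rule bij_betw_imageI)
  show "inj_on (\<lambda>\<sigma>. map \<sigma> [0..<n]) {\<sigma>. \<sigma> permutes {..<n}}"
  proof (rule inj_onI, rule ext)
    fix \<sigma> \<tau> i
    assume "\<sigma> \<in> {\<sigma>. \<sigma> permutes {..<n}}" "\<tau> \<in> {\<sigma>. \<sigma> permutes {..<n}}" "map \<sigma> [0..<n] = map \<tau> [0..<n]"
    then show "\<sigma> i = \<tau> i"
      by (cases "i < n") (auto simp: map_eq_conv permutes_not_in)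
  qed
  show "(\<lambda>\<sigma>. map \<sigma> [0..<n]) ` {\<sigma>. \<sigma> permutes {..<n}} = permutations_of_set {..<n}"
  proof (intro equalityI subsetI)
    fix ps assume "ps \<in> (\<lambda>\<sigma>. map \<sigma> [0..<n]) ` {\<sigma>. \<sigma> permutes {..<n}}"
    then obtain \<sigma> where \<sigma>: "\<sigma> permutes {..<n}" and ps: "ps = map \<sigma> [0..<n]" by blast
    have "[0..<n] \<in> permutations_of_set {..<n}" by (auto simp: atLeast0LessThan)
    then show "ps \<in> permutations_of_set {..<n}"
      unfolding ps using permutations_of_set_image_permutes[OF \<sigma>] by blast
  next
    fix ps assume ps: "ps \<in> permutations_of_set {..<n}"
    then have len: "length ps = n" and "set ps = {..<n}" "distinct ps"
      by (auto simp: permutations_of_set_def length_finite_permutations_of_set)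
    define \<sigma> where "\<sigma> i = (if i < n then ps ! i else i)" for i
    have "bij_betw \<sigma> {..<n} {..<n}"
      unfolding bij_betw_def inj_on_def \<sigma>_def
      using \<open>set ps = _\<close> \<open>distinct ps\<close> len by (auto simp: nth_eq_iff_index_eq set_conv_nth)
    then have "\<sigma> permutes {..<n}" by (rule bij_imp_permutes) (simp add: \<sigma>_def)
    moreover have "map \<sigma> [0..<n] = ps" unfolding \<sigma>_def using len by (intro nth_equalityI) auto
    ultimately show "ps \<in> (\<lambda>\<sigma>. map \<sigma> [0..<n]) ` {\<sigma>. \<sigma> permutes {..<n}}" by blast
  qed
qed

lemma forest_list_mset [simp]: "mset (forest_list F) = F"
  unfolding forest_list_def by (rule someI_ex) (rule ex_mset)

lemma forest_list_empty [simp]: "forest_list {#} = []"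
  using forest_list_mset[of "{#}"] by (metis mset_zero_iff)

lemma forest_list_single [simp]: "forest_list {#u#} = [u]"
  using forest_list_mset[of "{#u#}"] by (metis mset_single_iff)

lemma scale_single [simp]: "scale c (Poly_Mapping.single x d) = Poly_Mapping.single x (c * d)"
  unfolding scale_def by simp

lemma scale_one [simp]: "scale 1 p = p"
  unfolding scale_def by (rule poly_mapping_eqI) (simp add: Poly_Mapping.map.rep_eq when_def)

lemma lin_single_one [simp]: "lin f (Poly_Mapping.single x 1) = f x"
  unfolding lin_def by simp

lemma act_empty [simp]: "act t {#} = Poly_Mapping.single t 1"
  unfolding act_def by simp

lemma act_single [simp]: "act t {#u#} = graft t u"
  unfolding act_def by simp

lemma tree_to_gl_single [simp]: "tree_to_gl (Poly_Mapping.single t 1) = Poly_Mapping.single {#t#} 1"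
  unfolding tree_to_gl_def by simp

lemma tree_to_gl_mult_single:
  "tree_to_gl G * Poly_Mapping.single F 1 =
     (\<Sum>s\<in>Poly_Mapping.keys G. Poly_Mapping.single (add_mset s F) (Poly_Mapping.lookup G s))"
  unfolding tree_to_gl_def lin_def by (simp add: sum_distrib_right mult_single)

lemma prod_single_one:
  "(\<Prod>l\<in>L. Poly_Mapping.single (a l) (1::'k::comm_semiring_1)) = Poly_Mapping.single (\<Sum>l\<in>L. a l) 1"
  by (induction L rule: infinite_finite_induct) (simp_all add: mult_single)

lemma gl_prod_single_sum:
  fixes F :: "'d forest"
  defines "ts \<equiv> forest_list F"
  shows "gl_prod F {#u#} =
    (\<Sum>i\<le>length ts. Poly_Mapping.single (if i = 0 then {#u#} else {#}) (1::'k::comm_ring_1) *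
       (\<Prod>l<length ts. tree_to_gl (act (ts ! l) (if i = Suc l then {#u#} else {#}))))"
proof -
  \<comment> \<open>A map from the one tree u to the slots 0..n is just the slot i receiving u.\<close>
  have part: "image_mset ((!) [u]) (filter_mset (\<lambda>j. f j = i) (mset_set {..<Suc 0})) =
      (if f 0 = i then {#u#} else {#})" for f :: "nat \<Rightarrow> nat" and i
    by (simp add: lessThan_Suc)
  show ?thesis
    unfolding gl_prod_def Let_def forest_list_single ts_def[symmetric] length_Cons list.size(3)
      part prod.atLeast1_atMost_eq[unfolded One_nat_def[symmetric]]
    by (rule sum.reindex_bij_witness[of _ "\<lambda>i. \<lambda>x\<in>{..<1}. i" "\<lambda>f. f 0"])
      (auto simp: PiE_iff extensional_def lessThan_Suc)
qed

lemma gl_prod_single: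
  fixes F :: "'d forest"
  shows "gl_prod F {#u#} = Poly_Mapping.single (add_mset u F) (1::'k::comm_ring_1) +
    (\<Sum>t\<in>#F. tree_to_gl (graft t u) * Poly_Mapping.single (F - {#t#}) 1)"
proof -
  define ts where "ts = forest_list F"
  define n where "n = length ts"
  have F: "F = mset ts" unfolding ts_def by simp
  have no_graft: "(\<Prod>l<n. Poly_Mapping.single {#ts ! l#} 1) = Poly_Mapping.single F (1::'k)"
    by (simp add: prod_single_one sum_lessThan_single_nth F n_def)
  have graft_at: "(\<Prod>l<n. tree_to_gl (act (ts ! l) (if i = l then {#u#} else {#}))) =
      tree_to_gl (graft (ts ! i) u) * Poly_Mapping.single (F - {#ts ! i#}) (1::'k)"
    if "i < n" for i
  proof -
    let ?h = "\<lambda>l. tree_to_gl (act (ts ! l) (if i = l then {#u#} else {#})) :: 'd forest \<Rightarrow>\<^sub>0 'k"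
    have "(\<Prod>l<n. ?h l) = ?h i * (\<Prod>l\<in>{..<n} - {i}. ?h l)"
      using that by (simp add: prod.remove)
    also have "(\<Prod>l\<in>{..<n} - {i}. ?h l) = Poly_Mapping.single (\<Sum>l\<in>{..<n} - {i}. {#ts ! l#}) 1"
      unfolding prod_single_one[symmetric] by (rule prod.cong) auto
    also have "(\<Sum>l\<in>{..<n} - {i}. {#ts ! l#}) = F - {#ts ! i#}"
      using sum.remove[of "{..<n}" i "\<lambda>l. {#ts ! l#}"] that
      by (simp add: sum_lessThan_single_nth F n_def)
    finally show ?thesis by simp
  qed
  have "gl_prod F {#u#} = Poly_Mapping.single (add_mset u F) (1::'k) +
      (\<Sum>i<n. tree_to_gl (graft (ts ! i) u) * Poly_Mapping.single (F - {#ts ! i#}) 1)"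
    unfolding gl_prod_single_sum ts_def[symmetric] n_def[symmetric] sum.atMost_shift
    by (simp add: no_graft graft_at mult_single)
  also have "(\<Sum>i<n. tree_to_gl (graft (ts ! i) u) * Poly_Mapping.single (F - {#ts ! i#}) (1::'k)) =
      (\<Sum>t\<in>#F. tree_to_gl (graft t u) * Poly_Mapping.single (F - {#t#}) 1)"
    unfolding F n_def by (rule sum_mset_mset_conv_sum_nth[symmetric])
  finally show ?thesis .
qed

context module
begin

lemma lin_ext_eq_sum_superset:
  "finite S \<Longrightarrow> Poly_Mapping.keys p \<subseteq> S \<Longrightarrow>
    lin_ext scale j p = (\<Sum>x\<in>S. scale (Poly_Mapping.lookup p x) (j x))"
  unfolding lin_ext_def by (rule sum.mono_neutral_left) (auto simp: in_keys_iff)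

lemma lin_ext_add: "lin_ext scale j (p + q) = lin_ext scale j p + lin_ext scale j q"
proof -
  let ?S = "Poly_Mapping.keys p \<union> Poly_Mapping.keys q"
  have "lin_ext scale j (p + q) = (\<Sum>x\<in>?S. scale (Poly_Mapping.lookup (p + q) x) (j x))"
    by (rule lin_ext_eq_sum_superset) (simp_all add: keys_add)
  also have "\<dots> = (\<Sum>x\<in>?S. scale (Poly_Mapping.lookup p x) (j x)) +
      (\<Sum>x\<in>?S. scale (Poly_Mapping.lookup q x) (j x))"
    by (simp add: lookup_add scale_left_distrib sum.distrib)
  also have "\<dots> = lin_ext scale j p + lin_ext scale j q"
    by (simp add: lin_ext_eq_sum_superset[of ?S])
  finally show ?thesis .
qed

lemma lin_ext_zero [simp]: "lin_ext scale j 0 = 0"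
  unfolding lin_ext_def by simp

lemma lin_ext_single [simp]: "lin_ext scale j (Poly_Mapping.single x c) = scale c (j x)"
  unfolding lin_ext_def by (simp add: lookup_single)

lemma lin_ext_sum: "lin_ext scale j (\<Sum>i\<in>I. p i) = (\<Sum>i\<in>I. lin_ext scale j (p i))"
  by (induction I rule: infinite_finite_induct) (simp_all add: lin_ext_add)

lemma lin_ext_sum_mset: "lin_ext scale j (\<Sum>x\<in>#M. p x) = (\<Sum>x\<in>#M. lin_ext scale j (p x))"
  by (induction M) (simp_all add: lin_ext_add)

lemma lin_ext_tree_to_gl:
  "lin_ext scale j (tree_to_gl G) =
    (\<Sum>s\<in>Poly_Mapping.keys G. scale (Poly_Mapping.lookup G s) (j {#s#}))"
  unfolding tree_to_gl_def lin_def by (simp add: lin_ext_sum)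

lemma lin_ext_tree_to_gl_mult_single:
  "lin_ext scale j (tree_to_gl G * Poly_Mapping.single F 1) =
    (\<Sum>s\<in>Poly_Mapping.keys G. scale (Poly_Mapping.lookup G s) (j (add_mset s F)))"
  by (simp add: tree_to_gl_mult_single lin_ext_sum)

end

declare image_mset_cong [fundef_cong]

locale rb_algebra =
  fixes sc :: "'k::field \<Rightarrow> 'a::ring_1 \<Rightarrow> 'a" and \<theta> :: 'k and R :: "'a \<Rightarrow> 'a"
  assumes rota_baxter: "rota_baxter sc \<theta> R"
begin

lemma vector_space: "vector_space sc"
  using rota_baxter unfolding rota_baxter_def k_algebra_def by auto

lemma linear_R: "Vector_Spaces.linear sc sc R"
  using rota_baxter unfolding rota_baxter_def by auto

sublocale vs: vector_space sc by (rule vector_space)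
sublocale vp: vector_space_pair sc sc ..
sublocale R: Vector_Spaces.linear sc sc R by (rule linear_R)

lemma scale_mult_left: "sc c (x * y) = sc c x * y"
  using rota_baxter unfolding rota_baxter_def k_algebra_def by auto

lemma scale_mult_right: "sc c (x * y) = x * sc c y"
  using rota_baxter unfolding rota_baxter_def k_algebra_def by metis

lemma R_rb_star: "R (rb_star sc \<theta> R x y) = R x * R y"
  using rota_baxter unfolding rota_baxter_def rb_star_def by (simp add: R.add R.scale)

lemma R_sum_mset: "R (\<Sum>x\<in>#M. f x) = (\<Sum>x\<in>#M. R (f x))"
  by (induction M) (simp_all add: R.add)

lemma scale_sum_mset: "sc c (\<Sum>x\<in>#M. f x) = (\<Sum>x\<in>#M. sc c (f x))"
  by (induction M) (simp_all add: vs.scale_right_distrib)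

lemma linear_mult_left: "Vector_Spaces.linear sc sc (\<lambda>x. a * x)"
  by (simp add: Vector_Spaces.linear_iff vector_space distrib_left scale_mult_right)

lemma linear_mult_right: "Vector_Spaces.linear sc sc (\<lambda>x. x * a)"
  by (simp add: Vector_Spaces.linear_iff vector_space distrib_right scale_mult_left)

lemma linear_sum_mset:
  "(\<And>z. z \<in># N \<Longrightarrow> Vector_Spaces.linear sc sc (f z)) \<Longrightarrow>
    Vector_Spaces.linear sc sc (\<lambda>x. \<Sum>z\<in>#N. f z x)"
  by (induction N) (simp_all add: vp.linear_zero vp.linear_compose_add)

function rb_sym :: "'a multiset \<Rightarrow> 'a" where
  "rb_sym M = (if size M \<le> 1 then sum_mset M else (\<Sum>x\<in>#M. R (rb_sym (M - {#x#})) * x))"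
  by auto
termination by (relation "measure size") (auto simp: size_Diff1_less)

declare rb_sym.simps [simp del]

lemma rb_sym_single [simp]: "rb_sym {#x#} = x"
  by (simp add: rb_sym.simps)

lemma rb_sym_rec: "2 \<le> size M \<Longrightarrow> rb_sym M = (\<Sum>x\<in>#M. R (rb_sym (M - {#x#})) * x)"
  by (subst rb_sym.simps) simp

lemma rb_sym_insert:
  assumes "N \<noteq> {#}"
  shows "rb_sym (add_mset a N) = R (rb_sym N) * a + (\<Sum>z\<in>#N. R (rb_sym (add_mset a (N - {#z#}))) * z)"
proof -
  have "2 \<le> size (add_mset a N)" using assms by (simp add: Suc_le_eq nonempty_has_size)
  then show ?thesis by (simp add: rb_sym_rec cong: image_mset_cong)
qed

lemma linear_rb_sym_insert: "Vector_Spaces.linear sc sc (\<lambda>x. rb_sym (add_mset x N))"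
proof (induction "size N" arbitrary: N rule: less_induct)
  case less
  show ?case
  proof (cases "N = {#}")
    case True
    then show ?thesis using vs.linear_ident by simp
  next
    case False
    have "Vector_Spaces.linear sc sc (\<lambda>x. R (rb_sym (add_mset x (N - {#z#}))) * z)" if "z \<in># N" for z
      using Vector_Spaces.linear_compose[OF Vector_Spaces.linear_compose[OF
          less[OF size_Diff1_less[OF that]] linear_R] linear_mult_right]
      by (simp add: comp_def)
    then have "Vector_Spaces.linear sc sc
        (\<lambda>x. R (rb_sym N) * x + (\<Sum>z\<in>#N. R (rb_sym (add_mset x (N - {#z#}))) * z))"
      by (intro vp.linear_compose_add linear_mult_left linear_sum_mset)
    then show ?thesis by (simp add: rb_sym_insert[OF False])
  qed
qed

lemma rb_star_rb_sym:
  assumes "2 \<le> size M"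
  shows "rb_star sc \<theta> R (rb_sym M) y =
    R (rb_sym M) * y + (\<Sum>x\<in>#M. R (rb_sym (M - {#x#})) * (R y * x + rb_tri sc \<theta> R x y))"
proof -
  have "R y * x + rb_tri sc \<theta> R x y = x * R y + sc \<theta> (x * y)" for x
    by (simp add: rb_tri_def)
  then show ?thesis
    by (simp add: rb_star_def rb_sym_rec[OF assms] sum_mset.distrib sum_mset_distrib_right
        scale_sum_mset distrib_left scale_mult_right mult.assoc)
qed

lemma rb_sym_insert_eq_rb_star:
  "M \<noteq> {#} \<Longrightarrow> rb_sym (add_mset y M) =
    rb_star sc \<theta> R (rb_sym M) y - (\<Sum>x\<in>#M. rb_sym (add_mset (rb_tri sc \<theta> R x y) (M - {#x#})))"
proof (induction "size M" arbitrary: M rule: less_induct)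
  case less
  show ?case
  proof (cases "size M = 1")
    case True
    then obtain x where "M = {#x#}" using size_1_singleton_mset by blast
    then show ?thesis
      using rb_sym_insert[of "{#x#}" y] by (simp add: rb_star_def rb_tri_def algebra_simps)
  next
    case False
    with less.prems have big: "2 \<le> size M" by (cases "size M") auto
    have ne: "M - {#x#} \<noteq> {#}" for x
    proof -
      have "size (M - {#x#}) \<noteq> 0" using big by (simp add: size_Diff_singleton_if)
      then show ?thesis by auto
    qed
    define T where "T x = rb_tri sc \<theta> R x y" for x
    define S where "S x = rb_sym (M - {#x#})" for x
    define W where "W x z = R (rb_sym (add_mset (T z) (M - {#x#} - {#z#})))" for x z
    have R_IH: "R (rb_sym (add_mset y (M - {#x#}))) = R (S x) * R y - (\<Sum>z\<in>#M - {#x#}. W x z)"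
      if "x \<in># M" for x
      using less(1)[OF size_Diff1_less[OF that] ne]
      by (simp add: S_def T_def W_def R.diff R_sum_mset R_rb_star)
    have T_insert: "rb_sym (add_mset (T x) (M - {#x#})) = R (S x) * T x + (\<Sum>z\<in>#M - {#x#}. W z x * z)" for x
      by (simp add: rb_sym_insert[OF ne] S_def W_def add_mset_commute)
    \<comment> \<open>The double sums produced by the two expansions cancel.\<close>
    have swap: "(\<Sum>x\<in>#M. (\<Sum>z\<in>#M - {#x#}. W x z) * x) = (\<Sum>x\<in>#M. \<Sum>z\<in>#M - {#x#}. W z x * z)"
      by (simp add: sum_mset_distrib_right sum_mset_remove_swap[where g = "\<lambda>x z. W x z * x"])
    have "rb_sym (add_mset y M) + (\<Sum>x\<in>#M. rb_sym (add_mset (T x) (M - {#x#}))) =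
        R (rb_sym M) * y + (\<Sum>x\<in>#M. R (S x) * (R y * x + T x))
        - (\<Sum>x\<in>#M. (\<Sum>z\<in>#M - {#x#}. W x z) * x) + (\<Sum>x\<in>#M. \<Sum>z\<in>#M - {#x#}. W z x * z)"
      by (simp add: rb_sym_insert[OF less.prems] R_IH T_insert left_diff_distrib distrib_left
          mult.assoc sum_mset.distrib sum_mset_subtractf cong: sum_mset_cong)
    also have "\<dots> = rb_star sc \<theta> R (rb_sym M) y"
      by (simp add: swap rb_star_rb_sym[OF big] S_def T_def)
    finally show ?thesis unfolding T_def by (simp add: eq_diff_eq)
  qed
qed

lemma rb_nest_snoc: "xs \<noteq> [] \<Longrightarrow> rb_nest R (xs @ [b]) = R (rb_nest R xs) * b"
  by (cases xs) auto

lemma rb_sym_image_mset_set: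
  assumes "finite A" "2 \<le> card A"
  shows "rb_sym (image_mset f (mset_set A)) = (\<Sum>a\<in>A. R (rb_sym (image_mset f (mset_set (A - {a})))) * f a)"
proof -
  have "image_mset f (mset_set (A - {a})) = image_mset f (mset_set A) - {#f a#}" if "a \<in> A" for a
    using that assms(1) by (simp add: mset_set_Diff image_mset_Diff)
  then show ?thesis
    using assms(2) by (simp add: rb_sym_rec sum_unfold_sum_mset multiset.map_comp comp_def cong: image_mset_cong)
qed

lemma sum_permutations_of_set_rb_nest:
  "finite A \<Longrightarrow> A \<noteq> {} \<Longrightarrow>
    (\<Sum>ps\<in>permutations_of_set A. rb_nest R (map f (rev ps))) = rb_sym (image_mset f (mset_set A))"
proof (induction "card A" arbitrary: A rule: less_induct)
  case less
  show ?case
  proof (cases "card A = 1")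
    case True
    then obtain a where "A = {a}" by (rule card_1_singletonE)
    then show ?thesis by simp
  next
    case False
    with less.prems have big: "2 \<le> card A" by (cases "card A") (auto simp: card_eq_0_iff)
    have ne: "A - {a} \<noteq> {}" for a
    proof -
      have "card (A - {a}) \<noteq> 0" using big by (simp add: card_Diff_singleton_if)
      then show ?thesis by (metis card.empty)
    qed
    have "(\<Sum>ps\<in>permutations_of_set A. rb_nest R (map f (rev ps))) =
        (\<Sum>a\<in>A. \<Sum>ps\<in>permutations_of_set (A - {a}). R (rb_nest R (map f (rev ps))) * f a)"
      unfolding sum_permutations_of_set_Cons[OF less.prems]
    proof (intro sum.cong refl)
      fix a ps assume "ps \<in> permutations_of_set (A - {a})"
      then have "set ps = A - {a}" by (rule permutations_of_setD(1))
      with ne[of a] have "ps \<noteq> []" by (metis set_empty)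
      then show "rb_nest R (map f (rev (a # ps))) = R (rb_nest R (map f (rev ps))) * f a"
        by (simp add: rb_nest_snoc)
    qed
    also have "\<dots> = (\<Sum>a\<in>A. R (rb_sym (image_mset f (mset_set (A - {a})))) * f a)"
    proof (intro sum.cong refl)
      fix a assume "a \<in> A"
      with less.prems have "card (A - {a}) < card A" by (intro card_Diff1_less)
      with less(1)[of "A - {a}"] less.prems ne[of a]
      show "(\<Sum>ps\<in>permutations_of_set (A - {a}). R (rb_nest R (map f (rev ps))) * f a) =
          R (rb_sym (image_mset f (mset_set (A - {a})))) * f a"
        by (simp flip: sum_distrib_right R.sum)
    qed
    also have "\<dots> = rb_sym (image_mset f (mset_set A))"
      using less.prems big by (simp add: rb_sym_image_mset_set)
    finally show ?thesis .
  qed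
qed

lemma sum_permutes_rb_nest:
  assumes "xs \<noteq> []"
  shows "(\<Sum>\<sigma>\<in>{\<sigma>. \<sigma> permutes {..<length xs}}. rb_nest R (map (\<lambda>i. f (xs ! \<sigma> i)) [0..<length xs])) =
    rb_sym (mset (map f xs))"
proof -
  let ?n = "length xs" and ?g = "\<lambda>i. f (xs ! i)"
  have "(\<Sum>\<sigma>\<in>{\<sigma>. \<sigma> permutes {..<?n}}. rb_nest R (map (\<lambda>i. f (xs ! \<sigma> i)) [0..<?n])) =
      (\<Sum>ps\<in>permutations_of_set {..<?n}. rb_nest R (map ?g ps))"
    using sum.reindex_bij_betw[OF bij_betw_permutes_permutations_of_set[of ?n],
        of "\<lambda>ps. rb_nest R (map ?g ps)"]
    by (simp add: comp_def)
  also have "\<dots> = (\<Sum>ps\<in>permutations_of_set {..<?n}. rb_nest R (map ?g (rev ps)))"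
    by (subst (2) rev_permutations_of_set[symmetric], subst sum.reindex) (auto simp: inj_on_def)
  also have "\<dots> = rb_sym (image_mset ?g (mset_set {..<?n}))"
    using assms by (simp add: sum_permutations_of_set_rb_nest lessThan_empty_iff)
  also have "image_mset ?g (mset_set {..<?n}) = mset (map f xs)"
  proof -
    have "map f xs = map ?g [0..<?n]" by (rule nth_equalityI) auto
    then show ?thesis by (simp add: atLeast0LessThan)
  qed
  finally show ?thesis .
qed

end

locale gl_embedding = rb_algebra sc \<theta> R
  for sc :: "'k::field \<Rightarrow> 'a::ring_1 \<Rightarrow> 'a" and \<theta> R +
  fixes j :: "'d forest \<Rightarrow> 'a"
  assumes graft_hom: "\<And>t t'. lin_ext sc j (tree_to_gl (graft t t')) = rb_tri sc \<theta> R (j {#t#}) (j {#t'#})"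
    and prod_hom: "\<And>F G. F \<noteq> {#} \<Longrightarrow> G \<noteq> {#} \<Longrightarrow>
      lin_ext sc j (gl_prod F G) = rb_star sc \<theta> R (j F) (j G)"
begin

abbreviation j_tree :: "'d rtree \<Rightarrow> 'a" where "j_tree t \<equiv> j {#t#}"

lemma lin_ext_graft_mult_single:
  assumes "\<And>s. j (add_mset s F) = rb_sym (image_mset j_tree (add_mset s F))"
  shows "lin_ext sc j (tree_to_gl (graft t u) * Poly_Mapping.single F 1) =
    rb_sym (add_mset (rb_tri sc \<theta> R (j_tree t) (j_tree u)) (image_mset j_tree F))"
proof -
  interpret insert: Vector_Spaces.linear sc sc "\<lambda>x. rb_sym (add_mset x (image_mset j_tree F))"
    by (rule linear_rb_sym_insert)
  let ?g = "graft t u :: 'd rtree \<Rightarrow>\<^sub>0 'k"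
  have "lin_ext sc j (tree_to_gl ?g * Poly_Mapping.single F 1) =
      (\<Sum>s\<in>Poly_Mapping.keys ?g.
        sc (Poly_Mapping.lookup ?g s) (rb_sym (add_mset (j_tree s) (image_mset j_tree F))))"
    by (simp add: vs.lin_ext_tree_to_gl_mult_single assms)
  also have "\<dots> = rb_sym (add_mset (\<Sum>s\<in>Poly_Mapping.keys ?g. sc (Poly_Mapping.lookup ?g s) (j_tree s))
      (image_mset j_tree F))"
    by (simp add: insert.sum insert.scale)
  also have "(\<Sum>s\<in>Poly_Mapping.keys ?g. sc (Poly_Mapping.lookup ?g s) (j_tree s)) =
      rb_tri sc \<theta> R (j_tree t) (j_tree u)"
    using graft_hom[of t u] by (simp add: vs.lin_ext_tree_to_gl)
  finally show ?thesis .
qed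

lemma j_eq_rb_sym: "F \<noteq> {#} \<Longrightarrow> j F = rb_sym (image_mset j_tree F)"
proof (induction "size F" arbitrary: F rule: less_induct)
  case less
  then obtain u G where F: "F = add_mset u G" by (metis multiset_cases)
  show ?case
  proof (cases "G = {#}")
    case True
    then show ?thesis by (simp add: F)
  next
    case False
    have jG: "j G = rb_sym (image_mset j_tree G)"
      using less(1)[OF _ False] by (simp add: F)
    have graft_term: "lin_ext sc j (tree_to_gl (graft t u) * Poly_Mapping.single (G - {#t#}) 1) =
        rb_sym (add_mset (rb_tri sc \<theta> R (j_tree t) (j_tree u)) (image_mset j_tree (G - {#t#})))"
      if "t \<in># G" for t
    proof (rule lin_ext_graft_mult_single)
      show "j (add_mset s (G - {#t#})) = rb_sym (image_mset j_tree (add_mset s (G - {#t#})))" for s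
        using less(1)[of "add_mset s (G - {#t#})"] that by (simp add: F size_Diff1_less)
    qed
    have "rb_star sc \<theta> R (j G) (j_tree u) = lin_ext sc j (gl_prod G {#u#})"
      using prod_hom[OF False] by simp
    also have "\<dots> = j F + (\<Sum>t\<in>#G.
        rb_sym (add_mset (rb_tri sc \<theta> R (j_tree t) (j_tree u)) (image_mset j_tree (G - {#t#}))))"
      by (simp add: F gl_prod_single vs.lin_ext_add vs.lin_ext_sum_mset graft_term cong: sum_mset_cong)
    also have "(\<Sum>t\<in>#G.
        rb_sym (add_mset (rb_tri sc \<theta> R (j_tree t) (j_tree u)) (image_mset j_tree (G - {#t#})))) =
      (\<Sum>a\<in>#image_mset j_tree G.
        rb_sym (add_mset (rb_tri sc \<theta> R a (j_tree u)) (image_mset j_tree G - {#a#})))"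
      unfolding image_mset.compositionality comp_def by (rule sum_mset_cong) (simp add: image_mset_Diff)
    finally show ?thesis
      using rb_sym_insert_eq_rb_star[of "image_mset j_tree G" "j_tree u"] False by (simp add: F jG)
  qed
qed

end

theorem theorem3p5:
  fixes sc :: "'k::field_char_0 \<Rightarrow> 'a::ring_1 \<Rightarrow> 'a"
    and \<theta> :: 'k
    and R :: "'a \<Rightarrow> 'a"
    and \<phi> :: "'d \<Rightarrow> 'a"
    and j :: "'d forest \<Rightarrow> 'a"
    and bs :: "'d list"
  assumes RB: "rota_baxter sc \<theta> R"
    and unit: "j {#} = 1"
    and gen: "\<And>d. j {#leaf d#} = \<phi> d"
    and graft_hom: "\<And>t t'. lin_ext sc j (tree_to_gl (graft t t'))
                     = rb_tri sc \<theta> R (j {#t#}) (j {#t'#})"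
    and prod_hom: "\<And>F G. F \<noteq> {#} \<Longrightarrow> G \<noteq> {#} \<Longrightarrow>
                     lin_ext sc j (gl_prod F G) = rb_star sc \<theta> R (j F) (j G)"
    and nonempty: "bs \<noteq> []"
  shows "lin_ext sc j (Poly_Mapping.single (mset (map leaf bs)) (1::'k)) =
         (\<Sum>\<sigma>\<in>{\<sigma>. \<sigma> permutes {..<length bs}}.
            rb_nest R (map (\<lambda>i. \<phi> (bs ! \<sigma> i)) [0..<length bs]))"
proof -
  interpret gl_embedding sc \<theta> R j
    using RB graft_hom prod_hom by unfold_locales
  have "image_mset j_tree (mset (map leaf bs)) = mset (map \<phi> bs)"
    by (simp add: gen image_mset.compositionality comp_def)
  then have "lin_ext sc j (Poly_Mapping.single (mset (map leaf bs)) 1) = rb_sym (mset (map \<phi> bs))"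
    using j_eq_rb_sym[of "mset (map leaf bs)"] nonempty by simp
  also have "\<dots> = (\<Sum>\<sigma>\<in>{\<sigma>. \<sigma> permutes {..<length bs}}.
      rb_nest R (map (\<lambda>i. \<phi> (bs ! \<sigma> i)) [0..<length bs]))"
    using sum_permutes_rb_nest[OF nonempty] by simp
  finally show ?thesis .
qed

end
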